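(* $\mathfrak{B}(V)=F\oplus\mathfrak{L}^-(V)$ if and only if all of the following hold: $p_{ii}=-1$ for all $i$; $p_{ij}p_{ji}=1$ for all $i\neq j$; and for every $m\ge2$ and every choice of pairwise distinct letters $h_1,\dots,h_m\in\{x_1,\dots,x_n\}$ there exists $\tau\in\mathbb{S}_m$ with $$(p_{h_{\tau(1)},h_{\tau(2)}\cdots h_{\tau(m)}}-1)(p_{h_{\tau(2)},h_{\tau(3)}\cdots h_{\tau(m)}}-1)\cdots(p_{h_{\tau(m-1)},h_{\tau(m)}}-1)\neq0 .$$
   Context: $V$ is a braided vector space of diagonal type over an algebraically closed field $F$ of characteristic $0$ with basis $x_1,\dots,x_n$, braiding $C(x_i\otimes x_j)=q_{ij}x_j\otimes x_i$, Nichols algebra $\mathfrak{B}(V)$ ($\mathbb{Z}^n$-graded, $\deg x_i=e_i$); $\chi(e_i,e_j)=q_{ij}$, $p_{ij}:=q_{ij}$, and $p_{u,v}:=\chi(\deg u,\deg v)$ for homogeneous $u,v$ (so $p_{h,h'h''\cdots}$ is the product of $p_{h,h'},p_{h,h''},\dots$). $\mathfrak{L}^-(V)$ is the Lie subalgebra of $\mathfrak{B}(V)$ generated by $V$ under the commutator $[a,b]^-=ab-ba$. *)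

theory Defs
  imports "HOL-Combinatorics.Permutations" "HOL-Computational_Algebra.Polynomial"
begin

text \<open>The tensor algebra T(V) on the basis x_0,...,x_{n-1} is modelled as finitely
supported functions from words (lists of letter indices) to the field.
The word [i1,...,ik] stands for x_i1 x_i2 ... x_ik.\<close>

definition tensor_space :: "nat \<Rightarrow> (nat list \<Rightarrow> 'a::field) set" where
  "tensor_space n = {f. finite {w. f w \<noteq> 0} \<and> (\<forall>w. f w \<noteq> 0 \<longrightarrow> set w \<subseteq> {..<n})}"

definition tone :: "nat list \<Rightarrow> 'a::field" where
  "tone w = (if w = [] then 1 else 0)"

definition tletter :: "nat \<Rightarrow> nat list \<Rightarrow> 'a::field" where
  "tletter i w = (if w = [i] then 1 else 0)"

definition tmul :: "(nat list \<Rightarrow> 'a::field) \<Rightarrow> (nat list \<Rightarrow> 'a) \<Rightarrow> nat list \<Rightarrow> 'a" where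
  "tmul f g w = (\<Sum>i\<le>length w. f (take i w) * g (drop i w))"

definition tcomm :: "(nat list \<Rightarrow> 'a::field) \<Rightarrow> (nat list \<Rightarrow> 'a) \<Rightarrow> nat list \<Rightarrow> 'a" where
  "tcomm f g w = tmul f g w - tmul g f w"

text \<open>Braid lift T_sigma of a permutation sigma of positions: the letter at position a
moves to position sigma a; every pair of positions a < b that is inverted contributes
the braiding factor q (w!a) (w!b), since c(x_i \<otimes> x_j) = q_ij x_j \<otimes> x_i.\<close>

definition permword :: "(nat \<Rightarrow> nat) \<Rightarrow> nat list \<Rightarrow> nat list" where
  "permword \<sigma> w = map (\<lambda>j. w ! inv \<sigma> j) [0..<length w]"

definition braid_coeff :: "(nat \<Rightarrow> nat \<Rightarrow> 'a::field) \<Rightarrow> (nat \<Rightarrow> nat) \<Rightarrow> nat list \<Rightarrow> 'a" where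
  "braid_coeff q \<sigma> w =
     (\<Prod>(a,b)\<in>{(a,b). a < b \<and> b < length w \<and> \<sigma> b < \<sigma> a}. q (w ! a) (w ! b))"

text \<open>Matrix entry of the quantum symmetrizer Omega = sum over all sigma of T_sigma.\<close>
definition omega_entry :: "(nat \<Rightarrow> nat \<Rightarrow> 'a::field) \<Rightarrow> nat list \<Rightarrow> nat list \<Rightarrow> 'a" where
  "omega_entry q w v =
     (\<Sum>\<sigma>\<in>{\<sigma>. \<sigma> permutes {..<length w}}.
        if permword \<sigma> w = v then braid_coeff q \<sigma> w else 0)"

definition omega :: "(nat \<Rightarrow> nat \<Rightarrow> 'a::field) \<Rightarrow> (nat list \<Rightarrow> 'a) \<Rightarrow> nat list \<Rightarrow> 'a" where
  "omega q f v = (\<Sum>w\<in>{w. f w \<noteq> 0 \<and> length w = length v}. f w * omega_entry q w v)"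

text \<open>Defining ideal of the Nichols algebra: I = direct sum of the kernels of the
quantum symmetrizers Omega_k; B(V) = T(V)/I.\<close>
definition nichols_ideal :: "nat \<Rightarrow> (nat \<Rightarrow> nat \<Rightarrow> 'a::field) \<Rightarrow> (nat list \<Rightarrow> 'a) set" where
  "nichols_ideal n q = {f \<in> tensor_space n. \<forall>v. omega q f v = 0}"

text \<open>Lie subalgebra of T(V) generated by V under the commutator; its image in B(V)
is the Lie subalgebra L^-(V) of B(V) generated by V.\<close>
inductive_set lie_gen :: "nat \<Rightarrow> (nat list \<Rightarrow> 'a::field) set" for n where
  gen: "i < n \<Longrightarrow> tletter i \<in> lie_gen n"
| zero: "(\<lambda>w. 0) \<in> lie_gen n"
| add: "a \<in> lie_gen n \<Longrightarrow> b \<in> lie_gen n \<Longrightarrow> (\<lambda>w. a w + b w) \<in> lie_gen n"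
| smult: "a \<in> lie_gen n \<Longrightarrow> (\<lambda>w. c * a w) \<in> lie_gen n"
| bracket: "a \<in> lie_gen n \<Longrightarrow> b \<in> lie_gen n \<Longrightarrow> tcomm a b \<in> lie_gen n"

text \<open>B(V) = F \<oplus> L^-(V), expressed in T(V) modulo the ideal I.\<close>
definition nichols_F_plus_L :: "nat \<Rightarrow> (nat \<Rightarrow> nat \<Rightarrow> 'a::field) \<Rightarrow> bool" where
  "nichols_F_plus_L n q \<longleftrightarrow>
     (\<forall>f\<in>tensor_space n. \<exists>c. \<exists>l\<in>lie_gen n.
        (\<lambda>w. f w - (c * tone w + l w)) \<in> nichols_ideal n q)
   \<and> (\<forall>c. \<forall>l\<in>lie_gen n. (\<lambda>w. c * tone w - l w) \<in> nichols_ideal n q \<longrightarrow> c = 0)"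

end

theory Submission
  imports Defs
begin

text \<open>
If \<open>p i j * p j i = 1\<close> for \<open>i \<noteq> j\<close>, the quantum symmetrizer sends a word with pairwise
distinct letters to the sum of all rearrangements of that letter set, each rescaled by an explicit
nonzero weight; so on the multilinear component with letter set \<open>S\<close> the Nichols ideal is the
kernel of a single linear functional \<open>\<psi>\<^sub>S\<close>. If moreover \<open>p i i = -1\<close>, the symmetrizer kills
every word with a repeated letter, because exchanging the two equal letters reverses the sign of
the braiding coefficient. Hence \<open>B(V) = F \<oplus> L(V)\<close> says exactly that every \<open>\<psi>\<^sub>S\<close> with
\<open>S \<noteq> {}\<close> is nonzero on some Lie element. The functionals are multiplicative up to a twist:
\<open>\<psi>\<^sub>S [a, b]\<close> is the sum over splittings \<open>S = S\<^sub>1 \<union> S\<^sub>2\<close> of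
\<open>\<psi>\<^sub>S\<^sub>1 a * \<psi>\<^sub>S\<^sub>2 b * (p(S\<^sub>1, S\<^sub>2) - 1)\<close> times a nonzero factor. So some Lie element is
seen by \<open>\<psi>\<^sub>S\<close> exactly when \<open>S\<close> can be built up one letter at a time, each new letter
\<open>x\<close> satisfying \<open>p(x, T) \<noteq> 1\<close> against the set \<open>T\<close> already built, and then the right-normed
bracket along that order is such an element; this is the condition on \<open>\<tau>\<close>. The conditions
on \<open>p i i\<close> and \<open>p i j * p j i\<close> come from the words of length two.
\<close>

section \<open>Inversions of a permutation\<close>

definition index_pairs :: "nat \<Rightarrow> (nat \<times> nat) set" where
  "index_pairs m = {(c,d). c < d \<and> d < m}"

definition inversions :: "(nat \<Rightarrow> nat) \<Rightarrow> nat \<Rightarrow> (nat \<times> nat) set" where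
  "inversions \<sigma> m = {(a,b). a < b \<and> b < m \<and> \<sigma> b < \<sigma> a}"

lemma finite_index_pairs[simp]: "finite (index_pairs m)"
  by (rule finite_subset[of _ "{..<m} \<times> {..<m}"]) (auto simp: index_pairs_def)

lemma index_pairs_trivial[simp]: "m \<le> 1 \<Longrightarrow> index_pairs m = {}"
  by (auto simp: index_pairs_def)

lemma finite_inversions[simp]: "finite (inversions \<sigma> m)"
  by (rule finite_subset[of _ "{..<m} \<times> {..<m}"]) (auto simp: inversions_def)

lemma prod_index_pairs_inv_permute:
  assumes p: "\<sigma> permutes {..<m}"
  shows "(\<Prod>(c,d)\<in>index_pairs m. W (inv \<sigma> c) (inv \<sigma> d))
       = (\<Prod>(c,d)\<in>{(c,d). c < m \<and> d < m \<and> \<sigma> c < \<sigma> d}. W c d)"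
proof -
  have inv: "inv \<sigma> (\<sigma> x) = x" "\<sigma> (inv \<sigma> x) = x" for x
    using p by (simp_all add: permutes_inverses)
  have bound: "x < m \<Longrightarrow> \<sigma> x < m" "x < m \<Longrightarrow> inv \<sigma> x < m" for x
    using p permutes_inv[OF p] by (metis lessThan_iff permutes_in_image)+
  show ?thesis
    by (rule prod.reindex_bij_witness[where i = "\<lambda>(c,d). (\<sigma> c, \<sigma> d)"
                                          and j = "\<lambda>(c,d). (inv \<sigma> c, inv \<sigma> d)"])
       (auto simp: index_pairs_def inv bound)
qed

lemma prod_index_pairs_permute:
  fixes W :: "nat \<Rightarrow> nat \<Rightarrow> 'a::comm_monoid_mult"
  assumes p: "\<sigma> permutes {..<m}"
  shows "(\<Prod>(c,d)\<in>index_pairs m. W (inv \<sigma> c) (inv \<sigma> d)) * (\<Prod>(c,d)\<in>inversions \<sigma> m. W c d)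
       = (\<Prod>(c,d)\<in>index_pairs m. W c d) * (\<Prod>(c,d)\<in>inversions \<sigma> m. W d c)"
proof -
  define NI where "NI = {(c,d). c < d \<and> d < m \<and> \<sigma> c < \<sigma> d}"
  have fNI: "finite NI" by (rule finite_subset[OF _ finite_index_pairs]) (auto simp: NI_def index_pairs_def)
  have inj: "\<sigma> x = \<sigma> y \<longleftrightarrow> x = y" for x y using p by (metis permutes_inj injD)
  have "{(c,d). c < m \<and> d < m \<and> \<sigma> c < \<sigma> d} = NI \<union> prod.swap ` inversions \<sigma> m"
    by (auto simp: NI_def inversions_def image_iff) (metis less_irrefl nat_neq_iff)
  moreover have "NI \<inter> prod.swap ` inversions \<sigma> m = {}"
    by (auto simp: NI_def inversions_def)
  ultimately have flipped: "(\<Prod>(c,d)\<in>index_pairs m. W (inv \<sigma> c) (inv \<sigma> d))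
      = (\<Prod>(c,d)\<in>NI. W c d) * (\<Prod>(c,d)\<in>inversions \<sigma> m. W d c)"
    unfolding prod_index_pairs_inv_permute[OF p] using fNI
    by (simp add: prod.union_disjoint prod.reindex case_prod_unfold)
  have "index_pairs m = NI \<union> inversions \<sigma> m" "NI \<inter> inversions \<sigma> m = {}"
    by (auto simp: index_pairs_def NI_def inversions_def) (metis inj linorder_neq_iff less_irrefl)
  then have "(\<Prod>(c,d)\<in>index_pairs m. W c d) = (\<Prod>(c,d)\<in>NI. W c d) * (\<Prod>(c,d)\<in>inversions \<sigma> m. W c d)"
    using fNI by (simp add: prod.union_disjoint)
  then show ?thesis unfolding flipped by (simp add: ac_simps)
qed

lemma prod_inversions_twist:
  fixes W Q :: "nat \<Rightarrow> nat \<Rightarrow> 'a::field"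
  assumes p: "\<sigma> permutes {..<m}"
    and swap: "\<And>c d. c < m \<Longrightarrow> d < m \<Longrightarrow> c \<noteq> d \<Longrightarrow> W c d = Q c d * W d c"
    and nonzero: "\<And>c d. c < m \<Longrightarrow> d < m \<Longrightarrow> c \<noteq> d \<Longrightarrow> W c d \<noteq> 0"
  shows "(\<Prod>(c,d)\<in>inversions \<sigma> m. Q c d) * (\<Prod>(c,d)\<in>index_pairs m. W (inv \<sigma> c) (inv \<sigma> d))
        = (\<Prod>(c,d)\<in>index_pairs m. W c d)"
proof -
  have "(\<Prod>(c,d)\<in>inversions \<sigma> m. W c d)
      = (\<Prod>(c,d)\<in>inversions \<sigma> m. Q c d) * (\<Prod>(c,d)\<in>inversions \<sigma> m. W d c)"
    unfolding prod.distrib[symmetric] by (rule prod.cong) (auto simp: inversions_def intro!: swap)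
  moreover have "(\<Prod>(c,d)\<in>inversions \<sigma> m. W d c) \<noteq> 0"
    unfolding prod_zero_iff[OF finite_inversions] using nonzero by (fastforce simp: inversions_def)
  ultimately show ?thesis using prod_index_pairs_permute[OF p, of W] by (simp add: ac_simps)
qed

definition inversion_sign :: "(nat \<Rightarrow> nat) \<Rightarrow> nat \<Rightarrow> 'a::field" where
  "inversion_sign \<sigma> m = (\<Prod>(c,d)\<in>inversions \<sigma> m. (-1))"

lemma inversion_sign_square: "inversion_sign \<sigma> m * inversion_sign \<sigma> m = 1"
  unfolding inversion_sign_def by (simp add: prod_constant power_mult_distrib[symmetric])

definition vandermonde :: "(nat \<Rightarrow> nat) \<Rightarrow> nat \<Rightarrow> 'a::field_char_0" where
  "vandermonde f m = (\<Prod>(c,d)\<in>index_pairs m. (of_nat (f d) - of_nat (f c)))"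

lemma vandermonde_nonzero: "inj_on f {..<m} \<Longrightarrow> vandermonde f m \<noteq> 0"
  unfolding vandermonde_def prod_zero_iff[OF finite_index_pairs]
  by (fastforce simp: index_pairs_def inj_on_def)

lemma vandermonde_permute:
  assumes "\<sigma> permutes {..<m}" and "inj_on f {..<m}"
  shows "inversion_sign \<sigma> m * vandermonde (\<lambda>x. f (inv \<sigma> x)) m = vandermonde f m"
  unfolding inversion_sign_def vandermonde_def
  by (rule prod_inversions_twist[OF assms(1), where W = "\<lambda>c d. of_nat (f d) - of_nat (f c)"])
     (use assms(2) in \<open>auto simp: inj_on_def\<close>)

text \<open>Multiplicativity of the sign is read off the Vandermonde product, which changes by the
  factor \<open>inversion_sign \<sigma> m\<close> under relabelling by \<open>\<sigma>\<close>.\<close>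

lemma inversion_sign_compose:
  assumes \<sigma>: "\<sigma> permutes {..<m}" and \<tau>: "\<tau> permutes {..<m}"
  shows "(inversion_sign (\<sigma> \<circ> \<tau>) m :: 'a::field_char_0)
       = inversion_sign \<sigma> m * inversion_sign \<tau> m"
proof -
  have inj_inv: "inj_on (inv \<tau>) {..<m}"
    using permutes_inv[OF \<tau>] by (meson permutes_inj_on)
  define V :: 'a where "V = vandermonde (\<lambda>x. inv \<tau> (inv \<sigma> x)) m"
  have "V \<noteq> 0"
    unfolding V_def
    using permutes_inj_on[OF permutes_compose[OF permutes_inv[OF \<sigma>] permutes_inv[OF \<tau>]]]
    by (intro vandermonde_nonzero) (simp add: comp_def)
  have "inv (\<sigma> \<circ> \<tau>) = inv \<tau> \<circ> inv \<sigma>"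
    using \<sigma> \<tau> by (simp add: o_inv_distrib permutes_bij)
  then have "inversion_sign (\<sigma> \<circ> \<tau>) m * V = vandermonde (\<lambda>x. x) m"
    using vandermonde_permute[OF permutes_compose[OF \<tau> \<sigma>], of "\<lambda>x. x"] by (simp add: V_def)
  moreover have "inversion_sign \<tau> m * vandermonde (inv \<tau>) m = vandermonde (\<lambda>x. x) m"
    using vandermonde_permute[OF \<tau>, of "\<lambda>x. x"] by simp
  moreover have "inversion_sign \<sigma> m * V = vandermonde (inv \<tau>) m"
    using vandermonde_permute[OF \<sigma> inj_inv] by (simp add: V_def)
  ultimately have "inversion_sign (\<sigma> \<circ> \<tau>) m * V = inversion_sign \<tau> m * (inversion_sign \<sigma> m * V)"
    by metis
  with \<open>V \<noteq> 0\<close> show ?thesis by (simp add: ac_simps)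
qed

lemma inversions_transpose:
  assumes "a < b" "b < m"
  shows "inversions (transpose a b) m = {(a,b)} \<union> Pair a ` {a<..<b} \<union> (\<lambda>k. (k,b)) ` {a<..<b}"
  using assms unfolding inversions_def by (auto simp: transpose_def split: if_splits)

lemma inversion_sign_transpose:
  assumes "a \<noteq> b" "a < m" "b < m"
  shows "inversion_sign (transpose a b) m = (-1 :: 'a::field)"
proof -
  have "inversion_sign (transpose a b) m = (-1 :: 'a)" if "a < b" "b < m" for a b
  proof -
    have "card (inversions (transpose a b) m) = 1 + 2 * card {a<..<b}"
      unfolding inversions_transpose[OF that]
      by (subst card_Un_disjoint, simp, simp, force)+ (simp add: card_image inj_on_def)
    then show ?thesis unfolding inversion_sign_def by (simp add: prod_constant)
  qed
  from this[of a b] this[of b a] assms show ?thesis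
    by (cases "a < b") (auto simp: transpose_commute)
qed

section \<open>Entries of the quantum symmetrizer\<close>

lemma braid_coeff_inversions:
  "braid_coeff q \<sigma> w = (\<Prod>(a,b)\<in>inversions \<sigma> (length w). q (w ! a) (w ! b))"
  by (simp add: braid_coeff_def inversions_def)

lemma braid_coeff_uminus:
  "braid_coeff (\<lambda>x y. - q x y) \<sigma> w = inversion_sign \<sigma> (length w) * braid_coeff q \<sigma> w"
  unfolding braid_coeff_inversions inversion_sign_def prod.distrib[symmetric]
  by (rule prod.cong) auto

lemma permword_conv_permute_list: "permword \<sigma> w = permute_list (inv \<sigma>) w"
  by (simp add: permword_def permute_list_def)

lemma length_permword[simp]: "length (permword \<sigma> w) = length w"
  by (simp add: permword_def)

lemma nth_permword: "i < length w \<Longrightarrow> permword \<sigma> w ! i = w ! inv \<sigma> i"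
  by (simp add: permword_def)

lemma mset_permword: "\<sigma> permutes {..<length w} \<Longrightarrow> mset (permword \<sigma> w) = mset w"
  unfolding permword_conv_permute_list by (rule mset_permute_list) (simp add: permutes_inv)

lemma permword_unique:
  assumes "distinct w" "mset w = mset v"
  shows "\<exists>\<sigma>\<^sub>0. {\<sigma>. \<sigma> permutes {..<length w} \<and> permword \<sigma> w = v} = {\<sigma>\<^sub>0}"
proof -
  from assms(2)[symmetric] obtain p where p: "p permutes {..<length w}" "permute_list p w = v"
    by (rule mset_eq_permutation)
  have "inv (inv p) = p" using p by (simp add: inv_inv_eq permutes_bij)
  then have \<sigma>\<^sub>0: "inv p permutes {..<length w}" "permword (inv p) w = v"
    using p by (simp_all add: permutes_inv permword_conv_permute_list)
  have "\<sigma> = inv p" if \<sigma>: "\<sigma> permutes {..<length w}" "permword \<sigma> w = v" for \<sigma>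
  proof -
    have "inv \<sigma> x = p x" for x
    proof (cases "x < length w")
      case True
      have "w ! inv \<sigma> x = w ! p x"
        using \<sigma> p True by (metis nth_permword permute_list_nth length_permword)
      moreover have "inv \<sigma> x < length w" "p x < length w"
        using True permutes_inv[OF \<sigma>(1)] p by (metis lessThan_iff permutes_in_image)+
      ultimately show ?thesis using assms(1) by (simp add: nth_eq_iff_index_eq)
    next
      case False
      then show ?thesis using permutes_inv[OF \<sigma>(1)] p by (metis lessThan_iff permutes_not_in)
    qed
    then have "inv \<sigma> = p" by auto
    then show ?thesis using \<sigma>(1) by (metis inv_inv_eq permutes_bij)
  qed
  with \<sigma>\<^sub>0 show ?thesis by blast
qed

definition anagrams :: "nat list \<Rightarrow> nat list set" where
  "anagrams v = {w. mset w = mset v}"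

lemma finite_anagrams[simp]: "finite (anagrams v)"
proof -
  have "anagrams v \<subseteq> {xs. set xs \<subseteq> set v \<and> length xs = length v}"
    unfolding anagrams_def by (auto dest: mset_eq_setD mset_eq_length)
  then show ?thesis by (rule finite_subset) (simp add: finite_lists_length_eq)
qed

lemma omega_entry_conv_sum:
  "omega_entry q w v = (\<Sum>\<sigma>\<in>{\<sigma>. \<sigma> permutes {..<length w} \<and> permword \<sigma> w = v}. braid_coeff q \<sigma> w)"
  unfolding omega_entry_def sum.inter_filter[OF finite_permutations[OF finite_lessThan], symmetric]
  by (rule sum.cong) auto

lemma omega_entry_nonzero_imp_mset_eq: "omega_entry q w v \<noteq> 0 \<Longrightarrow> mset w = mset v"
  unfolding omega_entry_conv_sum by (metis (mono_tags, lifting) empty_Collect_eq mset_permword sum.empty)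

lemma omega_conv_anagrams:
  assumes fin: "finite {w. f w \<noteq> 0}"
  shows "omega q f v = (\<Sum>w\<in>anagrams v. f w * omega_entry q w v)"
proof -
  let ?A = "{w. f w \<noteq> 0 \<and> length w = length v}"
  have "finite ?A" using fin by (rule rev_finite_subset) auto
  then have "omega q f v = (\<Sum>w\<in>?A \<inter> anagrams v. f w * omega_entry q w v)"
    unfolding omega_def
    by (intro sum.mono_neutral_right) (auto simp: anagrams_def dest: omega_entry_nonzero_imp_mset_eq)
  also have "\<dots> = (\<Sum>w\<in>anagrams v. f w * omega_entry q w v)"
    by (rule sum.mono_neutral_left) (use finite_anagrams[of v] in \<open>auto simp: anagrams_def dest: mset_eq_length\<close>)
  finally show ?thesis .
qed

definition pair_weight :: "(nat \<Rightarrow> nat \<Rightarrow> 'a::field) \<Rightarrow> nat list \<Rightarrow> 'a" where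
  "pair_weight W w = (\<Prod>(c,d)\<in>index_pairs (length w). W (w ! c) (w ! d))"

lemma braid_coeff_pair_weight:
  fixes W Q :: "nat \<Rightarrow> nat \<Rightarrow> 'a::field"
  assumes p: "\<sigma> permutes {..<length w}"
    and swap: "\<And>c d. c < length w \<Longrightarrow> d < length w \<Longrightarrow> c \<noteq> d \<Longrightarrow>
                 W (w!c) (w!d) = Q (w!c) (w!d) * W (w!d) (w!c)"
    and nonzero: "\<And>c d. c < length w \<Longrightarrow> d < length w \<Longrightarrow> c \<noteq> d \<Longrightarrow> W (w!c) (w!d) \<noteq> 0"
  shows "braid_coeff Q \<sigma> w * pair_weight W (permword \<sigma> w) = pair_weight W w"
proof -
  have "pair_weight W (permword \<sigma> w)
      = (\<Prod>(c,d)\<in>index_pairs (length w). W (w ! inv \<sigma> c) (w ! inv \<sigma> d))"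
    unfolding pair_weight_def length_permword
    by (rule prod.cong) (auto simp: index_pairs_def nth_permword)
  moreover have "(\<Prod>(c,d)\<in>inversions \<sigma> (length w). Q (w!c) (w!d)) *
      (\<Prod>(c,d)\<in>index_pairs (length w). W (w ! inv \<sigma> c) (w ! inv \<sigma> d))
      = (\<Prod>(c,d)\<in>index_pairs (length w). W (w!c) (w!d))"
    by (rule prod_inversions_twist[OF p, where W = "\<lambda>c d. W (w!c) (w!d)" and Q = "\<lambda>c d. Q (w!c) (w!d)"])
       (rule swap nonzero; assumption)+
  ultimately show ?thesis
    unfolding braid_coeff_inversions pair_weight_def by simp
qed

lemma pair_weight_nonzero:
  assumes "\<And>c d. c < length w \<Longrightarrow> d < length w \<Longrightarrow> c \<noteq> d \<Longrightarrow> W (w!c) (w!d) \<noteq> 0"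
  shows "pair_weight W w \<noteq> 0"
  unfolding pair_weight_def prod_zero_iff[OF finite_index_pairs]
  using assms by (fastforce simp: index_pairs_def)

lemma nth_less_if_set_subset: "set w \<subseteq> {..<n} \<Longrightarrow> c < length w \<Longrightarrow> w ! c < n"
  using nth_mem by fastforce

text \<open>Since \<open>q i j * q j i = 1\<close>, the product over the pairs \<open>i < j\<close> of letters of a word
  with distinct letters changes exactly by the braiding coefficient when the word is permuted.\<close>

definition upper_q :: "(nat \<Rightarrow> nat \<Rightarrow> 'a::field) \<Rightarrow> nat \<Rightarrow> nat \<Rightarrow> 'a" where
  "upper_q q x y = (if x < y then q x y else 1)"

definition upper_weight :: "(nat \<Rightarrow> nat \<Rightarrow> 'a::field) \<Rightarrow> nat list \<Rightarrow> 'a" where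
  "upper_weight q w = pair_weight (upper_q q) w"

locale symmetric_braiding =
  fixes n :: nat and q :: "nat \<Rightarrow> nat \<Rightarrow> 'a::field_char_0"
  assumes nonzero: "\<forall>i<n. \<forall>j<n. q i j \<noteq> 0"
    and q_inverse: "\<forall>i<n. \<forall>j<n. i \<noteq> j \<longrightarrow> q i j * q j i = 1"
begin

lemma upper_q_swap: "x < n \<Longrightarrow> y < n \<Longrightarrow> x \<noteq> y \<Longrightarrow> upper_q q x y = q x y * upper_q q y x"
  using q_inverse by (auto simp: upper_q_def mult.commute)

lemma upper_q_nonzero: "x < n \<Longrightarrow> y < n \<Longrightarrow> upper_q q x y \<noteq> 0"
  using nonzero by (auto simp: upper_q_def)

lemma upper_weight_nonzero: "set w \<subseteq> {..<n} \<Longrightarrow> upper_weight q w \<noteq> 0"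
  unfolding upper_weight_def
  by (rule pair_weight_nonzero) (simp add: upper_q_nonzero nth_less_if_set_subset)

lemma braid_coeff_upper_weight:
  assumes p: "\<sigma> permutes {..<length w}" and "distinct w" "set w \<subseteq> {..<n}"
  shows "braid_coeff q \<sigma> w * upper_weight q (permword \<sigma> w) = upper_weight q w"
  unfolding upper_weight_def
proof (rule braid_coeff_pair_weight[OF p])
  fix c d assume "c < length w" "d < length w" "c \<noteq> d"
  then show "upper_q q (w!c) (w!d) = q (w!c) (w!d) * upper_q q (w!d) (w!c)"
    using assms(2,3) by (intro upper_q_swap) (auto simp: nth_eq_iff_index_eq nth_less_if_set_subset)
  show "upper_q q (w!c) (w!d) \<noteq> 0"
    using assms(3) \<open>c < length w\<close> \<open>d < length w\<close>
    by (simp add: upper_q_nonzero nth_less_if_set_subset)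
qed

lemma omega_entry_distinct:
  assumes "distinct w" "mset w = mset v" "set w \<subseteq> {..<n}"
  shows "omega_entry q w v * upper_weight q v = upper_weight q w"
proof -
  obtain \<sigma>\<^sub>0 where e: "{\<sigma>. \<sigma> permutes {..<length w} \<and> permword \<sigma> w = v} = {\<sigma>\<^sub>0}"
    using permword_unique[OF assms(1,2)] by blast
  then have "\<sigma>\<^sub>0 permutes {..<length w}" "permword \<sigma>\<^sub>0 w = v" by auto
  then show ?thesis
    unfolding omega_entry_conv_sum e using braid_coeff_upper_weight[OF _ assms(1,3)] by auto
qed

end

lemma sum_inversion_sign_transpose_closed:
  assumes "finite A" and perm: "\<And>\<sigma>. \<sigma> \<in> A \<Longrightarrow> \<sigma> permutes {..<m}"
    and closed: "\<And>\<sigma>. \<sigma> \<in> A \<Longrightarrow> \<sigma> \<circ> transpose a b \<in> A"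
    and ab: "a \<noteq> b" "a < m" "b < m"
  shows "(\<Sum>\<sigma>\<in>A. inversion_sign \<sigma> m :: 'a::field_char_0) = 0"
proof -
  let ?t = "transpose a b"
  have "(\<Sum>\<sigma>\<in>A. inversion_sign \<sigma> m :: 'a) = (\<Sum>\<sigma>\<in>A. inversion_sign (\<sigma> \<circ> ?t) m)"
    by (rule sum.reindex_bij_witness[where i = "\<lambda>\<sigma>. \<sigma> \<circ> ?t" and j = "\<lambda>\<sigma>. \<sigma> \<circ> ?t"])
       (auto simp: comp_assoc closed)
  also have "\<dots> = - (\<Sum>\<sigma>\<in>A. inversion_sign \<sigma> m)"
    unfolding sum_negf[symmetric] using ab
    by (intro sum.cong refl)
       (simp add: inversion_sign_compose[OF perm permutes_swap_id] inversion_sign_transpose)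
  finally have "(\<Sum>\<sigma>\<in>A. inversion_sign \<sigma> m) + (\<Sum>\<sigma>\<in>A. inversion_sign \<sigma> m) = (0::'a)"
    by (simp add: eq_neg_iff_add_eq_0)
  then show ?thesis by (simp add: mult_2[symmetric])
qed

definition signed_upper_q :: "(nat \<Rightarrow> nat \<Rightarrow> 'a::field) \<Rightarrow> nat \<Rightarrow> nat \<Rightarrow> 'a" where
  "signed_upper_q q x y = (if x < y then - q x y else 1)"

locale fermionic_braiding = symmetric_braiding +
  assumes q_diag: "\<forall>i<n. q i i = -1"
begin

lemma signed_upper_q_swap:
  "x < n \<Longrightarrow> y < n \<Longrightarrow> signed_upper_q q x y = (- q x y) * signed_upper_q q y x"
  using q_inverse q_diag by (cases "x = y") (auto simp: signed_upper_q_def mult.commute)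

lemma signed_upper_q_nonzero: "x < n \<Longrightarrow> y < n \<Longrightarrow> signed_upper_q q x y \<noteq> 0"
  using nonzero by (auto simp: signed_upper_q_def)

lemma signed_weight_nonzero: "set w \<subseteq> {..<n} \<Longrightarrow> pair_weight (signed_upper_q q) w \<noteq> 0"
  by (rule pair_weight_nonzero) (simp add: signed_upper_q_nonzero nth_less_if_set_subset)

text \<open>With \<open>q i i = -1\<close> the twisted weight also absorbs equal letters, at the price of the
  sign of the permutation.\<close>

lemma braid_coeff_signed_weight:
  assumes p: "\<sigma> permutes {..<length w}" and s: "set w \<subseteq> {..<n}"
  shows "braid_coeff q \<sigma> w * pair_weight (signed_upper_q q) (permword \<sigma> w)
       = inversion_sign \<sigma> (length w) * pair_weight (signed_upper_q q) w"
proof -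
  have "braid_coeff (\<lambda>x y. - q x y) \<sigma> w * pair_weight (signed_upper_q q) (permword \<sigma> w)
      = pair_weight (signed_upper_q q) w"
  proof (rule braid_coeff_pair_weight[OF p])
    fix c d assume "c < length w" "d < length w"
    then show "signed_upper_q q (w!c) (w!d) = - q (w!c) (w!d) * signed_upper_q q (w!d) (w!c)"
      using s by (intro signed_upper_q_swap nth_less_if_set_subset)
  next
    fix c d assume "c < length w" "d < length w"
    then show "signed_upper_q q (w!c) (w!d) \<noteq> 0"
      using s by (intro signed_upper_q_nonzero nth_less_if_set_subset)
  qed
  then have "inversion_sign \<sigma> (length w) * (inversion_sign \<sigma> (length w) * braid_coeff q \<sigma> w
      * pair_weight (signed_upper_q q) (permword \<sigma> w))
      = inversion_sign \<sigma> (length w) * pair_weight (signed_upper_q q) w"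
    by (simp add: braid_coeff_uminus)
  then show ?thesis by (simp add: mult.assoc[symmetric] inversion_sign_square)
qed

lemma omega_entry_repeated:
  assumes "\<not> distinct w" and s: "set w \<subseteq> {..<n}"
  shows "omega_entry q w v = 0"
proof -
  define A where "A = {\<sigma>. \<sigma> permutes {..<length w} \<and> permword \<sigma> w = v}"
  show ?thesis
  proof (cases "A = {}")
    case True then show ?thesis unfolding omega_entry_conv_sum A_def[symmetric] by simp
  next
    case False
    then have "mset v = mset w" unfolding A_def using mset_permword by auto
    then have "set v \<subseteq> {..<n}" using s by (metis set_mset_mset)
    define G where "G = pair_weight (signed_upper_q q)"
    have "G v \<noteq> 0" unfolding G_def by (rule signed_weight_nonzero) fact
    then have coeff: "braid_coeff q \<sigma> w = inversion_sign \<sigma> (length w) * G w / G v" if "\<sigma> \<in> A" for \<sigma>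
      using braid_coeff_signed_weight[of \<sigma> w] that s unfolding A_def G_def by (auto simp: field_simps)
    obtain a b where ab: "a < length w" "b < length w" "a \<noteq> b" "w ! a = w ! b"
      using assms(1) by (auto simp: distinct_conv_nth)
    let ?t = "transpose a b"
    have "\<sigma> \<circ> ?t \<in> A" if "\<sigma> \<in> A" for \<sigma>
    proof -
      have \<sigma>: "\<sigma> permutes {..<length w}" "permword \<sigma> w = v" using that unfolding A_def by auto
      have "inv (\<sigma> \<circ> ?t) = ?t \<circ> inv \<sigma>"
        using \<sigma> ab by (simp add: o_inv_distrib permutes_bij inv_transpose_eq)
      moreover have "w ! ?t k = w ! k" for k using ab by (auto simp: transpose_def)
      ultimately have "permword (\<sigma> \<circ> ?t) w = permword \<sigma> w"
        by (intro nth_equalityI) (auto simp: nth_permword)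
      then show ?thesis using \<sigma> ab permutes_compose[OF permutes_swap_id \<sigma>(1)] unfolding A_def by auto
    qed
    moreover have "finite A"
      unfolding A_def by (rule finite_subset[OF _ finite_permutations[of "{..<length w}"]]) auto
    ultimately have signs: "(\<Sum>\<sigma>\<in>A. inversion_sign \<sigma> (length w) :: 'a) = 0"
      using ab by (intro sum_inversion_sign_transpose_closed[where a = a and b = b]) (auto simp: A_def)
    have "omega_entry q w v = (\<Sum>\<sigma>\<in>A. inversion_sign \<sigma> (length w) * G w / G v)"
      unfolding omega_entry_conv_sum A_def[symmetric] by (rule sum.cong) (simp_all add: coeff)
    also have "\<dots> = (\<Sum>\<sigma>\<in>A. inversion_sign \<sigma> (length w)) * G w / G v"
      by (simp add: sum_divide_distrib sum_distrib_right)
    finally show ?thesis using signs by simp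
  qed
qed

end

section \<open>The functionals \<open>\<psi>\<^sub>S\<close>\<close>

definition arrangements :: "nat set \<Rightarrow> nat list set" where
  "arrangements S = {w. distinct w \<and> set w = S}"

lemma arrangements_infinite: "infinite S \<Longrightarrow> arrangements S = {}"
  by (auto simp: arrangements_def)

lemma finite_arrangements[simp]: "finite (arrangements S)"
proof (cases "finite S")
  case True
  show ?thesis unfolding arrangements_def
    by (rule finite_subset[OF _ finite_subset_distinct[OF True]]) auto
qed (simp add: arrangements_infinite)

lemma arrangements_empty: "arrangements {} = {[]}"
  by (auto simp: arrangements_def)

lemma anagrams_distinct:
  assumes "distinct v"
  shows "anagrams v = arrangements (set v)"
proof (rule set_eqI)
  fix w
  show "w \<in> anagrams v \<longleftrightarrow> w \<in> arrangements (set v)"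
    using assms mset_eq_imp_distinct_iff[of w v] mset_eq_setD[of w v] set_eq_iff_mset_eq_distinct[of w v]
    by (auto simp: anagrams_def arrangements_def)
qed

text \<open>For a word \<open>v\<close> with distinct letters, \<open>sym_functional q (set v) f\<close> is the
  \<open>v\<close>-coefficient of the quantum symmetrizer applied to \<open>f\<close>, times \<open>upper_weight q v\<close>
  (lemma \<open>omega_sym_functional\<close>); it plays the role of \<open>\<psi>\<^sub>S\<close>.\<close>

definition sym_functional :: "(nat \<Rightarrow> nat \<Rightarrow> 'a::field) \<Rightarrow> nat set \<Rightarrow> (nat list \<Rightarrow> 'a) \<Rightarrow> 'a" where
  "sym_functional q S f = (\<Sum>w\<in>arrangements S. f w * upper_weight q w)"

definition tword :: "nat list \<Rightarrow> nat list \<Rightarrow> 'a::field" where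
  "tword u w = (if w = u then 1 else 0)"

lemma sym_functional_add:
  "sym_functional q S (\<lambda>w. f w + g w) = sym_functional q S f + sym_functional q S g"
  unfolding sym_functional_def by (simp add: sum.distrib algebra_simps)

lemma sym_functional_diff:
  "sym_functional q S (\<lambda>w. f w - g w) = sym_functional q S f - sym_functional q S g"
  unfolding sym_functional_def by (simp add: sum_subtractf algebra_simps)

lemma sym_functional_smult: "sym_functional q S (\<lambda>w. c * f w) = c * sym_functional q S f"
  unfolding sym_functional_def by (simp add: sum_distrib_left algebra_simps)

lemma sym_functional_zero: "sym_functional q S (\<lambda>w. 0) = 0"
  unfolding sym_functional_def by simp

lemma sym_functional_sum:
  "sym_functional q S (\<lambda>w. \<Sum>T\<in>F. a T * L T w) = (\<Sum>T\<in>F. a T * sym_functional q S (L T))"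
  unfolding sym_functional_def sum_distrib_right sum_distrib_left
  by (subst sum.swap) (simp add: mult.assoc)

lemma sym_functional_empty: "sym_functional q {} f = f []"
  by (simp add: sym_functional_def arrangements_empty upper_weight_def pair_weight_def)

lemma sym_functional_infinite: "infinite S \<Longrightarrow> sym_functional q S f = 0"
  by (simp add: sym_functional_def arrangements_infinite)

lemma sym_functional_not_subset:
  assumes "f \<in> tensor_space n" "\<not> S \<subseteq> {..<n}"
  shows "sym_functional q S f = 0"
  unfolding sym_functional_def
  using assms by (intro sum.neutral) (auto simp: arrangements_def tensor_space_def)

lemma sym_functional_delta:
  assumes "distinct u"
  shows "sym_functional q S (\<lambda>w. if w = u then c else 0) = (if S = set u then c * upper_weight q u else 0)"
proof -
  have "sym_functional q S (\<lambda>w. if w = u then c else 0)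
      = (\<Sum>w\<in>arrangements S. if w = u then c * upper_weight q u else 0)"
    unfolding sym_functional_def by (intro sum.cong) auto
  also have "\<dots> = (if u \<in> arrangements S then c * upper_weight q u else 0)"
    by (rule sum.delta[OF finite_arrangements])
  finally show ?thesis using assms by (auto simp: arrangements_def)
qed

lemma sym_functional_tword: "distinct u \<Longrightarrow> sym_functional q (set u) (tword u) = upper_weight q u"
  unfolding tword_def[abs_def] by (simp add: sym_functional_delta)

lemma sym_functional_tletter: "sym_functional q S (tletter i) = (if S = {i} then 1 else 0)"
  unfolding tletter_def[abs_def] by (simp add: sym_functional_delta upper_weight_def pair_weight_def)

lemma sym_functional_tone: "sym_functional q S tone = (if S = {} then 1 else 0)"
  unfolding tone_def[abs_def] by (simp add: sym_functional_delta upper_weight_def pair_weight_def)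

context symmetric_braiding begin

lemma omega_sym_functional:
  assumes fin: "finite {w. f w \<noteq> 0}" and v: "distinct v" "set v \<subseteq> {..<n}"
  shows "omega q f v * upper_weight q v = sym_functional q (set v) f"
  unfolding omega_conv_anagrams[OF fin] anagrams_distinct[OF v(1)] sum_distrib_right
    sym_functional_def mult.assoc
proof (rule sum.cong[OF refl])
  fix w assume "w \<in> arrangements (set v)"
  then have "distinct w" "mset w = mset v" "set w \<subseteq> {..<n}"
    using v by (auto simp: arrangements_def set_eq_iff_mset_eq_distinct)
  then show "f w * (omega_entry q w v * upper_weight q v) = f w * upper_weight q w"
    by (simp add: omega_entry_distinct)
qed

lemma sym_functional_eq_0_if_ideal:
  assumes f: "f \<in> nichols_ideal n q"
  shows "sym_functional q S f = 0"
proof (cases "finite S \<and> S \<subseteq> {..<n}")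
  case True
  define v where "v = sorted_list_of_set S"
  have v: "distinct v" "set v = S" using True by (simp_all add: v_def)
  from f have "finite {w. f w \<noteq> 0}" "omega q f v = 0"
    by (auto simp: nichols_ideal_def tensor_space_def)
  then show ?thesis using omega_sym_functional[of f v] v True by simp
next
  case False
  from f have "f \<in> tensor_space n" by (simp add: nichols_ideal_def)
  with False show ?thesis by (meson sym_functional_infinite sym_functional_not_subset)
qed

end

context fermionic_braiding begin

lemma ideal_if_sym_functional_eq_0:
  assumes f: "f \<in> tensor_space n" and zero: "\<And>S. sym_functional q S f = 0"
  shows "f \<in> nichols_ideal n q"
proof -
  from f have fin: "finite {w. f w \<noteq> 0}" and supp: "\<And>w. f w \<noteq> 0 \<Longrightarrow> set w \<subseteq> {..<n}"
    by (auto simp: tensor_space_def)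
  have "omega q f v = 0" for v
  proof (cases "distinct v \<and> set v \<subseteq> {..<n}")
    case True
    then show ?thesis using omega_sym_functional[OF fin] zero upper_weight_nonzero by simp
  next
    case False
    have "f w * omega_entry q w v = 0" if "w \<in> anagrams v" for w
    proof (cases "f w = 0")
      case False
      with that supp have w: "set w \<subseteq> {..<n}" "mset w = mset v" by (auto simp: anagrams_def)
      with \<open>\<not> (distinct v \<and> set v \<subseteq> {..<n})\<close> have "\<not> distinct w"
        by (metis mset_eq_imp_distinct_iff mset_eq_setD)
      then show ?thesis using omega_entry_repeated[OF _ w(1)] by simp
    qed simp
    then show ?thesis unfolding omega_conv_anagrams[OF fin] by (rule sum.neutral[OF ballI])
  qed
  then show ?thesis using f by (simp add: nichols_ideal_def)
qed

end

section \<open>\<open>\<psi>\<^sub>S\<close> of products and commutators\<close>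

lemma prod_index_pairs_Suc:
  "(\<Prod>(c,d)\<in>index_pairs (Suc m). F c d)
     = (\<Prod>d<m. F 0 (Suc d)) * (\<Prod>(c,d)\<in>index_pairs m. F (Suc c) (Suc d))"
proof -
  have "index_pairs (Suc m) = (\<lambda>d. (0, Suc d)) ` {..<m} \<union> (\<lambda>(c,d). (Suc c, Suc d)) ` index_pairs m"
  proof (rule set_eqI, clarify)
    fix c d
    show "(c,d) \<in> index_pairs (Suc m)
      \<longleftrightarrow> (c,d) \<in> (\<lambda>d. (0, Suc d)) ` {..<m} \<union> (\<lambda>(c,d). (Suc c, Suc d)) ` index_pairs m"
      by (cases c; cases d) (auto simp: index_pairs_def image_iff)
  qed
  moreover have "(\<lambda>d. (0::nat, Suc d)) ` {..<m} \<inter> (\<lambda>(c,d). (Suc c, Suc d)) ` index_pairs m = {}"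
    by auto
  moreover have "inj_on (\<lambda>d. (0::nat, Suc d)) {..<m}" "inj_on (\<lambda>(c,d). (Suc c, Suc d)) (index_pairs m)"
    by (auto simp: inj_on_def)
  ultimately show ?thesis
    by (simp add: prod.union_disjoint prod.reindex case_prod_unfold comp_def)
qed

lemma pair_weight_Cons: "pair_weight W (x # w) = (\<Prod>y\<leftarrow>w. W x y) * pair_weight W w"
  unfolding pair_weight_def length_Cons prod_index_pairs_Suc
  by (simp add: prod.list_conv_set_nth atLeast0LessThan)

lemma pair_weight_append:
  "pair_weight W (a @ b) = pair_weight W a * pair_weight W b * (\<Prod>x\<leftarrow>a. \<Prod>y\<leftarrow>b. W x y)"
  by (induction a) (simp_all add: pair_weight_Cons pair_weight_def[of W "[]"] index_pairs_def ac_simps)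

definition upper_q_prod :: "(nat \<Rightarrow> nat \<Rightarrow> 'a::field) \<Rightarrow> nat set \<Rightarrow> nat set \<Rightarrow> 'a" where
  "upper_q_prod q A B = (\<Prod>x\<in>A. \<Prod>y\<in>B. upper_q q x y)"

lemma upper_weight_append:
  "distinct (a @ b) \<Longrightarrow>
   upper_weight q (a @ b) = upper_weight q a * upper_weight q b * upper_q_prod q (set a) (set b)"
  unfolding upper_weight_def upper_q_prod_def pair_weight_append
  by (simp add: prod.distinct_set_conv_list)

text \<open>Cutting an arrangement of \<open>S\<close> into a prefix and a suffix is the same as choosing a subset
  \<open>S\<^sub>1\<close> of \<open>S\<close> together with arrangements of \<open>S\<^sub>1\<close> and of \<open>S - S\<^sub>1\<close>.\<close>

lemma sum_arrangements_split:
  "(\<Sum>w\<in>arrangements S. \<Sum>k\<le>length w. F (take k w) (drop k w))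
     = (\<Sum>S\<^sub>1\<in>Pow S. \<Sum>w\<^sub>1\<in>arrangements S\<^sub>1. \<Sum>w\<^sub>2\<in>arrangements (S - S\<^sub>1). F w\<^sub>1 w\<^sub>2)"
proof (cases "finite S")
  case True
  define T where "T = {(w\<^sub>1, w\<^sub>2). w\<^sub>1 @ w\<^sub>2 \<in> arrangements S}"
  have "(\<Sum>w\<in>arrangements S. \<Sum>k\<le>length w. F (take k w) (drop k w))
      = (\<Sum>(w,k)\<in>Sigma (arrangements S) (\<lambda>w. {..length w}). F (take k w) (drop k w))"
    by (rule sum.Sigma) auto
  also have "\<dots> = (\<Sum>(w\<^sub>1, w\<^sub>2)\<in>T. F w\<^sub>1 w\<^sub>2)"
    by (rule sum.reindex_bij_witness[where i = "\<lambda>(w\<^sub>1, w\<^sub>2). (w\<^sub>1 @ w\<^sub>2, length w\<^sub>1)"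
                                         and j = "\<lambda>(w,k). (take k w, drop k w)"])
       (auto simp: T_def min_def)
  also have "\<dots> = (\<Sum>(S\<^sub>1, p)\<in>Sigma (Pow S) (\<lambda>S\<^sub>1. arrangements S\<^sub>1 \<times> arrangements (S - S\<^sub>1)).
                      F (fst p) (snd p))"
    by (rule sum.reindex_bij_witness[where i = "\<lambda>(S\<^sub>1, p). p" and j = "\<lambda>(w\<^sub>1, w\<^sub>2). (set w\<^sub>1, (w\<^sub>1, w\<^sub>2))"])
       (auto simp: T_def arrangements_def)
  also have "\<dots> = (\<Sum>S\<^sub>1\<in>Pow S. \<Sum>p\<in>arrangements S\<^sub>1 \<times> arrangements (S - S\<^sub>1). F (fst p) (snd p))"
    by (rule sum.Sigma[symmetric]) (auto simp: True)
  also have "\<dots> = (\<Sum>S\<^sub>1\<in>Pow S. \<Sum>w\<^sub>1\<in>arrangements S\<^sub>1. \<Sum>w\<^sub>2\<in>arrangements (S - S\<^sub>1). F w\<^sub>1 w\<^sub>2)"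
    by (simp add: sum.cartesian_product case_prod_unfold)
  finally show ?thesis .
qed (simp add: arrangements_infinite)

lemma sym_functional_tmul:
  "sym_functional q S (tmul a b)
     = (\<Sum>S\<^sub>1\<in>Pow S. sym_functional q S\<^sub>1 a * sym_functional q (S - S\<^sub>1) b * upper_q_prod q S\<^sub>1 (S - S\<^sub>1))"
proof -
  have "sym_functional q S (tmul a b)
      = (\<Sum>S\<^sub>1\<in>Pow S. \<Sum>w\<^sub>1\<in>arrangements S\<^sub>1. \<Sum>w\<^sub>2\<in>arrangements (S - S\<^sub>1).
           a w\<^sub>1 * b w\<^sub>2 * upper_weight q (w\<^sub>1 @ w\<^sub>2))"
    unfolding sym_functional_def tmul_def sum_distrib_right sum_arrangements_split[symmetric]
    by simp
  also have "\<dots> = (\<Sum>S\<^sub>1\<in>Pow S. \<Sum>w\<^sub>1\<in>arrangements S\<^sub>1. \<Sum>w\<^sub>2\<in>arrangements (S - S\<^sub>1).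
           (a w\<^sub>1 * upper_weight q w\<^sub>1) * (b w\<^sub>2 * upper_weight q w\<^sub>2) * upper_q_prod q S\<^sub>1 (S - S\<^sub>1))"
    by (intro sum.cong refl) (auto simp: arrangements_def upper_weight_append)
  also have "\<dots> = (\<Sum>S\<^sub>1\<in>Pow S. sym_functional q S\<^sub>1 a * sym_functional q (S - S\<^sub>1) b * upper_q_prod q S\<^sub>1 (S - S\<^sub>1))"
    unfolding sym_functional_def sum_product by (simp add: sum_distrib_right)
  finally show ?thesis .
qed

lemma sym_functional_tcomm:
  "sym_functional q S (tcomm a b)
     = (\<Sum>S\<^sub>1\<in>Pow S. sym_functional q S\<^sub>1 a * sym_functional q (S - S\<^sub>1) b
                     * (upper_q_prod q S\<^sub>1 (S - S\<^sub>1) - upper_q_prod q (S - S\<^sub>1) S\<^sub>1))"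
proof -
  have "sym_functional q S (tmul b a)
      = (\<Sum>S\<^sub>1\<in>Pow S. sym_functional q (S - S\<^sub>1) b * sym_functional q (S - (S - S\<^sub>1)) a
                      * upper_q_prod q (S - S\<^sub>1) (S - (S - S\<^sub>1)))"
    unfolding sym_functional_tmul
    by (rule sum.reindex_bij_witness[where i = "\<lambda>S\<^sub>1. S - S\<^sub>1" and j = "\<lambda>S\<^sub>1. S - S\<^sub>1"])
       (auto simp: Diff_Diff_Int Int_absorb1 Int_absorb2)
  also have "\<dots> = (\<Sum>S\<^sub>1\<in>Pow S. sym_functional q S\<^sub>1 a * sym_functional q (S - S\<^sub>1) b * upper_q_prod q (S - S\<^sub>1) S\<^sub>1)"
    by (intro sum.cong refl) (auto simp: double_diff)
  finally have swapped: "sym_functional q S (tmul b a) = \<dots>" .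
  show ?thesis
    unfolding tcomm_def[abs_def] sym_functional_diff swapped sym_functional_tmul[of q S a b]
    by (simp add: sum_subtractf[symmetric] algebra_simps)
qed

lemma sym_functional_tcomm_tletter:
  "sym_functional q S (tcomm (tletter x) g) =
     (if x \<in> S then sym_functional q (S - {x}) g
                     * (upper_q_prod q {x} (S - {x}) - upper_q_prod q (S - {x}) {x}) else 0)"
proof (cases "finite S")
  case True
  have "sym_functional q S (tcomm (tletter x) g) = (\<Sum>S\<^sub>1\<in>Pow S. if S\<^sub>1 = {x} then
     sym_functional q (S - S\<^sub>1) g * (upper_q_prod q S\<^sub>1 (S - S\<^sub>1) - upper_q_prod q (S - S\<^sub>1) S\<^sub>1) else 0)"
    unfolding sym_functional_tcomm sym_functional_tletter by (rule sum.cong) auto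
  then show ?thesis by (simp add: sum.delta True)
qed (simp add: sym_functional_infinite)

section \<open>Lie elements\<close>

lemma tensor_space_zero: "(\<lambda>w. 0) \<in> tensor_space n"
  by (simp add: tensor_space_def)

lemma tensor_space_add:
  assumes "a \<in> tensor_space n" "b \<in> tensor_space n"
  shows "(\<lambda>w. a w + b w) \<in> tensor_space n"
proof -
  have "{w. a w + b w \<noteq> 0} \<subseteq> {w. a w \<noteq> 0} \<union> {w. b w \<noteq> 0}" by auto
  with assms show ?thesis
    unfolding tensor_space_def by (auto intro: finite_subset)
qed

lemma tensor_space_smult: "a \<in> tensor_space n \<Longrightarrow> (\<lambda>w. c * a w) \<in> tensor_space n"
  unfolding tensor_space_def by (auto intro: finite_subset[of _ "{w. a w \<noteq> 0}"])

lemma tensor_space_diff: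
  assumes "a \<in> tensor_space n" "b \<in> tensor_space n"
  shows "(\<lambda>w. a w - b w) \<in> tensor_space n"
  using tensor_space_add[OF assms(1) tensor_space_smult[OF assms(2), of "-1"]] by simp

lemma tensor_space_tone: "tone \<in> tensor_space n"
  unfolding tensor_space_def tone_def by (auto intro: finite_subset[of _ "{[]}"])

lemma tensor_space_tword: "set u \<subseteq> {..<n} \<Longrightarrow> tword u \<in> tensor_space n"
  unfolding tensor_space_def tword_def by (auto intro: finite_subset[of _ "{u}"])

lemma tensor_space_tmul:
  assumes a: "a \<in> tensor_space n" and b: "b \<in> tensor_space n"
  shows "tmul a b \<in> tensor_space n"
proof -
  have nonzero_split: "\<exists>k. a (take k w) \<noteq> 0 \<and> b (drop k w) \<noteq> 0" if "tmul a b w \<noteq> 0" for w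
  proof (rule ccontr)
    assume "\<not> ?thesis"
    then have "tmul a b w = 0" unfolding tmul_def by (intro sum.neutral) auto
    with that show False by simp
  qed
  have "{w. tmul a b w \<noteq> 0} \<subseteq> (\<lambda>(x,y). x @ y) ` ({w. a w \<noteq> 0} \<times> {w. b w \<noteq> 0})"
  proof
    fix w assume "w \<in> {w. tmul a b w \<noteq> 0}"
    then obtain k where "a (take k w) \<noteq> 0" "b (drop k w) \<noteq> 0" using nonzero_split by blast
    then show "w \<in> (\<lambda>(x,y). x @ y) ` ({w. a w \<noteq> 0} \<times> {w. b w \<noteq> 0})"
      by (auto intro!: image_eqI[of _ _ "(take k w, drop k w)"])
  qed
  moreover have "finite ((\<lambda>(x,y). x @ y) ` ({w. a w \<noteq> 0} \<times> {w. b w \<noteq> 0}))"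
    using a b by (auto simp: tensor_space_def)
  moreover have "set w \<subseteq> {..<n}" if nz: "tmul a b w \<noteq> 0" for w
  proof -
    obtain k where "a (take k w) \<noteq> 0" "b (drop k w) \<noteq> 0" using nonzero_split[OF nz] by blast
    then have "set (take k w) \<subseteq> {..<n}" "set (drop k w) \<subseteq> {..<n}"
      using a b by (auto simp: tensor_space_def)
    then show ?thesis by (metis append_take_drop_id set_append le_sup_iff)
  qed
  ultimately show ?thesis by (auto simp: tensor_space_def intro: finite_subset)
qed

lemma lie_gen_subset_tensor_space: "l \<in> lie_gen n \<Longrightarrow> l \<in> tensor_space n"
proof (induction rule: lie_gen.induct)
  case (gen i)
  then show ?case unfolding tensor_space_def tletter_def by (auto intro: finite_subset[of _ "{[i]}"])
next
  case (bracket a b)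
  then show ?case unfolding tcomm_def[abs_def] by (intro tensor_space_diff tensor_space_tmul)
qed (auto intro: tensor_space_zero tensor_space_add tensor_space_smult)

lemma lie_gen_Nil: "l \<in> lie_gen n \<Longrightarrow> l [] = 0"
  by (induction rule: lie_gen.induct) (auto simp: tletter_def tcomm_def tmul_def)

lemma lie_gen_antisym_length2: "l \<in> lie_gen n \<Longrightarrow> l [x,y] = - l [y,x]"
proof (induction rule: lie_gen.induct)
  case (bracket a b)
  then show ?case by (simp add: tcomm_def tmul_def numeral_2_eq_2 lie_gen_Nil)
qed (auto simp: tletter_def)

lemma lie_gen_sum:
  "finite A \<Longrightarrow> (\<And>T. T \<in> A \<Longrightarrow> L T \<in> lie_gen n) \<Longrightarrow> (\<lambda>w. \<Sum>T\<in>A. c T * L T w) \<in> lie_gen n"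
proof (induction A rule: finite_induct)
  case empty then show ?case by (simp add: lie_gen.zero)
next
  case (insert x F)
  then show ?case by (simp add: lie_gen.add lie_gen.smult)
qed

section \<open>Admissible letter sets\<close>

text \<open>This is the condition on \<open>\<tau>\<close> of the theorem, read from the right: the letters
  \<open>h (\<tau> (m-1)), h (\<tau> (m-2)), \<dots>\<close> are inserted one at a time
  (see \<open>chain_condition_iff_admissible\<close>).\<close>

inductive admissible :: "(nat \<Rightarrow> nat \<Rightarrow> 'a::field) \<Rightarrow> nat set \<Rightarrow> bool" for q where
  singleton: "admissible q {x}"
| insert: "x \<notin> S \<Longrightarrow> admissible q S \<Longrightarrow> (\<Prod>y\<in>S. q x y) \<noteq> 1 \<Longrightarrow> admissible q (insert x S)"

lemma admissible_finite_nonempty: "admissible q S \<Longrightarrow> finite S \<and> S \<noteq> {}"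
  by (induction rule: admissible.induct) auto

definition q_prod :: "(nat \<Rightarrow> nat \<Rightarrow> 'a::field) \<Rightarrow> nat set \<Rightarrow> nat set \<Rightarrow> 'a" where
  "q_prod q A B = (\<Prod>x\<in>A. \<Prod>y\<in>B. q x y)"

context symmetric_braiding begin

lemma upper_q_prod_swap:
  assumes "A \<inter> B = {}" "A \<subseteq> {..<n}" "B \<subseteq> {..<n}"
  shows "upper_q_prod q A B = q_prod q A B * upper_q_prod q B A"
proof -
  have "upper_q_prod q A B = (\<Prod>x\<in>A. \<Prod>y\<in>B. q x y * upper_q q y x)"
    unfolding upper_q_prod_def using assms by (intro prod.cong refl upper_q_swap) auto
  also have "\<dots> = q_prod q A B * (\<Prod>x\<in>A. \<Prod>y\<in>B. upper_q q y x)"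
    unfolding q_prod_def by (simp add: prod.distrib)
  also have "(\<Prod>x\<in>A. \<Prod>y\<in>B. upper_q q y x) = upper_q_prod q B A"
    unfolding upper_q_prod_def by (rule prod.swap)
  finally show ?thesis .
qed

lemma upper_q_prod_nonzero:
  assumes "A \<subseteq> {..<n}" "B \<subseteq> {..<n}"
  shows "upper_q_prod q A B \<noteq> 0"
  using assms finite_subset[OF assms(1)] finite_subset[OF assms(2)]
  unfolding upper_q_prod_def by (auto simp: prod_zero_iff upper_q_nonzero subset_iff)

lemma upper_q_prod_diff:
  assumes "A \<inter> B = {}" "A \<subseteq> {..<n}" "B \<subseteq> {..<n}"
  shows "upper_q_prod q A B - upper_q_prod q B A = (q_prod q A B - 1) * upper_q_prod q B A"
  using upper_q_prod_swap[OF assms] by (simp add: algebra_simps)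

lemma prod_q_inverse:
  assumes "a \<notin> A" "insert a A \<subseteq> {..<n}"
  shows "(\<Prod>x\<in>A. q x a) * (\<Prod>x\<in>A. q a x) = 1"
  unfolding prod.distrib[symmetric] using assms q_inverse
  by (intro prod.neutral) (auto simp: subset_iff)

text \<open>The key step: with \<open>X = q_prod q {a} A\<close>, \<open>Y = q_prod q {a} B\<close>, \<open>Z = q_prod q A B\<close> one has
  \<open>q_prod q (insert a A) B = Y * Z\<close> and, since \<open>q_prod q A {a} = 1 / X\<close>,
  \<open>q_prod q A (insert a B) = Z / X\<close>; so \<open>X \<noteq> 1\<close> and \<open>Y * Z \<noteq> 1\<close> leave either
  \<open>Z \<noteq> 1 \<and> X * Y \<noteq> 1\<close> or \<open>Y \<noteq> 1 \<and> Z \<noteq> X\<close>.\<close>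

lemma admissible_Un:
  assumes "admissible q A"
  shows "admissible q B \<Longrightarrow> A \<inter> B = {} \<Longrightarrow> A \<subseteq> {..<n} \<Longrightarrow> B \<subseteq> {..<n} \<Longrightarrow> q_prod q A B \<noteq> 1
     \<Longrightarrow> admissible q (A \<union> B)"
  using assms
proof (induction arbitrary: B rule: admissible.induct)
  case (singleton x)
  then show ?case by (auto intro!: admissible.insert simp: q_prod_def)
next
  case (insert a A B)
  have fin: "finite A" "finite B"
    using admissible_finite_nonempty insert.hyps(2) insert.prems(1) by blast+
  define X where "X = (\<Prod>y\<in>A. q a y)"
  define Y where "Y = (\<Prod>y\<in>B. q a y)"
  define Z where "Z = q_prod q A B"
  have "X \<noteq> 1" using insert.hyps(3) by (simp add: X_def)
  have aB: "a \<notin> B" using insert.prems(2) by auto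
  have "Y * Z \<noteq> 1" using insert.prems(5) insert.hyps(1) fin by (simp add: q_prod_def Y_def Z_def)
  then consider "Z \<noteq> 1" "X * Y \<noteq> 1" | "Y \<noteq> 1" "Z \<noteq> X"
    using \<open>X \<noteq> 1\<close> by (metis mult.commute mult_1_right)
  then show ?case
  proof cases
    case 1
    have "admissible q (A \<union> B)"
      using insert.IH[OF insert.prems(1)] insert.prems 1 by (auto simp: Z_def)
    moreover have "(\<Prod>y\<in>A \<union> B. q a y) = X * Y"
      unfolding X_def Y_def using fin insert.prems(2) by (intro prod.union_disjoint) auto
    ultimately show ?thesis
      using 1 insert.hyps(1) aB by (auto intro!: admissible.insert)
  next
    case 2
    have "admissible q (insert a B)"
      using insert.prems(1) aB 2 by (intro admissible.insert) (auto simp: Y_def)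
    define W where "W = (\<Prod>x\<in>A. q x a)"
    have "W * X = 1" unfolding W_def X_def
      by (rule prod_q_inverse) (use insert.hyps(1) insert.prems(3) in auto)
    have "q_prod q A (insert a B) = W * Z"
      unfolding q_prod_def W_def Z_def using fin aB by (simp add: prod.distrib)
    moreover have "W * Z \<noteq> 1"
      using \<open>W * X = 1\<close> 2 by (metis mult.assoc mult.commute mult_1_right)
    ultimately have "admissible q (A \<union> insert a B)"
      using insert.IH[OF \<open>admissible q (insert a B)\<close>] insert.prems insert.hyps(1) by auto
    then show ?thesis by simp
  qed
qed

lemma lie_sym_functional_nonzero_imp_admissible:
  assumes "l \<in> lie_gen n"
  shows "S \<subseteq> {..<n} \<Longrightarrow> sym_functional q S l \<noteq> 0 \<Longrightarrow> admissible q S"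
  using assms
proof (induction arbitrary: S rule: lie_gen.induct)
  case (gen i)
  then show ?case by (simp add: sym_functional_tletter admissible.singleton split: if_splits)
next
  case zero
  then show ?case by (simp add: sym_functional_zero)
next
  case (add a b)
  then have "sym_functional q S a \<noteq> 0 \<or> sym_functional q S b \<noteq> 0"
    by (auto simp: sym_functional_add)
  then show ?case using add.IH add.prems(1) by blast
next
  case (smult a c)
  then show ?case by (auto simp: sym_functional_smult)
next
  case (bracket a b S)
  have "(\<Sum>S\<^sub>1\<in>Pow S. sym_functional q S\<^sub>1 a * sym_functional q (S - S\<^sub>1) b
          * (upper_q_prod q S\<^sub>1 (S - S\<^sub>1) - upper_q_prod q (S - S\<^sub>1) S\<^sub>1)) \<noteq> 0"
    using bracket.prems(2) unfolding sym_functional_tcomm .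
  then obtain S\<^sub>1 where S\<^sub>1: "S\<^sub>1 \<in> Pow S" and nonzero:
    "sym_functional q S\<^sub>1 a * sym_functional q (S - S\<^sub>1) b
       * (upper_q_prod q S\<^sub>1 (S - S\<^sub>1) - upper_q_prod q (S - S\<^sub>1) S\<^sub>1) \<noteq> 0"
    by (rule sum.not_neutral_contains_not_neutral)
  have sub: "S\<^sub>1 \<subseteq> {..<n}" "S - S\<^sub>1 \<subseteq> {..<n}" using S\<^sub>1 bracket.prems(1) by auto
  have "admissible q S\<^sub>1" using bracket.IH(1)[OF sub(1)] nonzero by auto
  moreover have "admissible q (S - S\<^sub>1)" using bracket.IH(2)[OF sub(2)] nonzero by auto
  moreover have "q_prod q S\<^sub>1 (S - S\<^sub>1) \<noteq> 1"
    using nonzero upper_q_prod_diff[of S\<^sub>1 "S - S\<^sub>1"] sub by auto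
  ultimately have "admissible q (S\<^sub>1 \<union> (S - S\<^sub>1))"
    using admissible_Un sub by blast
  moreover have "S\<^sub>1 \<union> (S - S\<^sub>1) = S" using S\<^sub>1 by auto
  ultimately show ?case by simp
qed

end

section \<open>Chain orderings and right-normed brackets\<close>

fun chain_factor :: "(nat \<Rightarrow> nat \<Rightarrow> 'a::field) \<Rightarrow> nat list \<Rightarrow> 'a" where
  "chain_factor q [] = 1"
| "chain_factor q [x] = 1"
| "chain_factor q (x # y # r) = ((\<Prod>z\<leftarrow>y # r. q x z) - 1) * chain_factor q (y # r)"

lemma greaterThanLessThan_Suc_Suc: "{Suc a<..<Suc b} = Suc ` {a<..<b}"
proof (rule set_eqI)
  fix x show "x \<in> {Suc a<..<Suc b} \<longleftrightarrow> x \<in> Suc ` {a<..<b}"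
  proof
    assume "x \<in> {Suc a<..<Suc b}"
    then have "x = Suc (x - 1)" "x - 1 \<in> {a<..<b}" by auto
    then show "x \<in> Suc ` {a<..<b}" by (metis imageI)
  qed auto
qed

lemma greaterThanLessThan_0_Suc: "{0<..<Suc b} = Suc ` {..<b}"
proof (rule set_eqI)
  fix x show "x \<in> {0<..<Suc b} \<longleftrightarrow> x \<in> Suc ` {..<b}"
  proof
    assume "x \<in> {0<..<Suc b}"
    then have "x = Suc (x - 1)" "x - 1 \<in> {..<b}" by auto
    then show "x \<in> Suc ` {..<b}" by (metis imageI)
  qed auto
qed

lemma prod_list_map_conv_prod_nth: "(\<Prod>x\<leftarrow>xs. f x) = (\<Prod>i<length xs. f (xs ! i))"
  by (simp add: prod.list_conv_set_nth atLeast0LessThan)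

lemma chain_factor_conv_prod:
  "chain_factor q s = (\<Prod>k<length s - 1. (\<Prod>l\<in>{k<..<length s}. q (s ! k) (s ! l)) - 1)"
proof (induction q s rule: chain_factor.induct)
  case (3 q x y r)
  let ?F = "\<lambda>k. (\<Prod>l\<in>{k<..<length (x # y # r)}. q ((x # y # r) ! k) ((x # y # r) ! l)) - 1"
  have "?F 0 = (\<Prod>z\<leftarrow>y # r. q x z) - 1"
    by (simp only: length_Cons greaterThanLessThan_0_Suc prod.reindex inj_Suc)
       (simp only: prod_list_map_conv_prod_nth length_Cons comp_def nth_Cons_0 nth_Cons_Suc)
  moreover have "?F (Suc k) = (\<Prod>l\<in>{k<..<length (y # r)}. q ((y # r) ! k) ((y # r) ! l)) - 1" for k
    by (simp only: length_Cons greaterThanLessThan_Suc_Suc prod.reindex inj_Suc) simp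
  ultimately show ?case using "3.IH" by (simp add: prod.lessThan_Suc_shift del: prod.lessThan_Suc)
qed simp_all

lemma chain_factor_map_upt:
  "chain_factor q (map g [0..<m]) = (\<Prod>k<m - 1. (\<Prod>l\<in>{k<..<m}. q (g k) (g l)) - 1)"
  unfolding chain_factor_conv_prod by (intro prod.cong refl arg_cong2[where f = "(-)"]) auto

lemma admissible_iff_chain:
  "admissible q S \<longleftrightarrow> (\<exists>s. distinct s \<and> set s = S \<and> s \<noteq> [] \<and> chain_factor q s \<noteq> 0)"
proof
  assume "admissible q S"
  then show "\<exists>s. distinct s \<and> set s = S \<and> s \<noteq> [] \<and> chain_factor q s \<noteq> 0"
  proof (induction rule: admissible.induct)
    case (singleton x)
    then show ?case by (intro exI[of _ "[x]"]) simp
  next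
    case (insert x S)
    then obtain s where s: "distinct s" "set s = S" "s \<noteq> []" "chain_factor q s \<noteq> 0" by blast
    then obtain y r where "s = y # r" by (cases s) auto
    moreover have "(\<Prod>z\<leftarrow>s. q x z) = (\<Prod>y\<in>S. q x y)"
      using s by (metis prod.distinct_set_conv_list)
    ultimately show ?case using s insert.hyps by (intro exI[of _ "x # s"]) auto
  qed
next
  assume "\<exists>s. distinct s \<and> set s = S \<and> s \<noteq> [] \<and> chain_factor q s \<noteq> 0"
  then obtain s where "distinct s" "set s = S" "s \<noteq> []" "chain_factor q s \<noteq> 0" by blast
  then show "admissible q S"
  proof (induction q s arbitrary: S rule: chain_factor.induct)
    case (2 q x)
    then show ?case by (auto intro: admissible.singleton)
  next
    case (3 q x y r)
    moreover have "(\<Prod>z\<leftarrow>y # r. q x z) = (\<Prod>z\<in>set (y # r). q x z)"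
      using "3.prems"(1) by (metis distinct.simps(2) prod.distinct_set_conv_list)
    ultimately show ?case by (auto intro!: admissible.insert[of x "set (y # r)", simplified])
  qed simp
qed

lemma ex_permutation_chain_iff_admissible:
  fixes h :: "nat \<Rightarrow> nat" and m :: nat
  assumes inj: "inj_on h {..<m}" and "0 < m"
  shows "(\<exists>\<tau>. \<tau> permutes {..<m} \<and> (\<Prod>k<m - 1. (\<Prod>l\<in>{k<..<m}. q (h (\<tau> k)) (h (\<tau> l))) - 1) \<noteq> 0)
     \<longleftrightarrow> admissible q (h ` {..<m})"
proof
  assume "\<exists>\<tau>. \<tau> permutes {..<m} \<and> (\<Prod>k<m - 1. (\<Prod>l\<in>{k<..<m}. q (h (\<tau> k)) (h (\<tau> l))) - 1) \<noteq> 0"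
  then obtain \<tau> where \<tau>: "\<tau> permutes {..<m}"
    and chain: "(\<Prod>k<m - 1. (\<Prod>l\<in>{k<..<m}. q (h (\<tau> k)) (h (\<tau> l))) - 1) \<noteq> 0" by blast
  have img: "\<tau> ` {..<m} = {..<m}" by (rule permutes_image[OF \<tau>])
  have "inj_on (h \<circ> \<tau>) {..<m}"
    using comp_inj_on[of \<tau> "{..<m}" h] permutes_inj_on[OF \<tau>] inj img by simp
  moreover have "(h \<circ> \<tau>) ` {..<m} = h ` {..<m}" by (metis image_comp img)
  ultimately show "admissible q (h ` {..<m})"
    unfolding admissible_iff_chain using chain \<open>0 < m\<close>
    by (intro exI[of _ "map (h \<circ> \<tau>) [0..<m]"])
       (simp add: distinct_map chain_factor_map_upt atLeast0LessThan)
next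
  assume "admissible q (h ` {..<m})"
  then obtain s where s: "distinct s" "set s = h ` {..<m}" "chain_factor q s \<noteq> 0"
    unfolding admissible_iff_chain by blast
  define u where "u = map h [0..<m]"
  have "distinct u" "set u = set s" using inj s by (simp_all add: u_def distinct_map atLeast0LessThan)
  then have "mset s = mset u" using s(1) by (simp add: set_eq_iff_mset_eq_distinct)
  then obtain \<tau> where \<tau>: "\<tau> permutes {..<length u}" "permute_list \<tau> u = s"
    by (rule mset_eq_permutation)
  have "s ! k = h (\<tau> k)" if "k < m" for k
  proof -
    have "\<tau> k < m" using permutes_in_image[OF \<tau>(1)] that by (simp add: u_def)
    then show ?thesis
      using \<tau>(1) that unfolding \<tau>(2)[symmetric] by (simp add: u_def permute_list_nth)
  qed
  moreover have "length s = m" using \<tau>(2) by (auto simp: u_def)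
  ultimately have "s = map (\<lambda>k. h (\<tau> k)) [0..<m]" by (intro nth_equalityI) auto
  then show "\<exists>\<tau>. \<tau> permutes {..<m} \<and> (\<Prod>k<m - 1. (\<Prod>l\<in>{k<..<m}. q (h (\<tau> k)) (h (\<tau> l))) - 1) \<noteq> 0"
    using \<tau>(1) s(3) by (auto simp: u_def chain_factor_map_upt)
qed

lemma chain_condition_iff_admissible:
  "(\<forall>(m::nat) (h::nat \<Rightarrow> nat). 2 \<le> m \<and> inj_on h {..<m} \<and> h ` {..<m} \<subseteq> {..<n} \<longrightarrow>
      (\<exists>\<tau>. \<tau> permutes {..<m} \<and> (\<Prod>k<m - 1. (\<Prod>l\<in>{k<..<m}. q (h (\<tau> k)) (h (\<tau> l))) - 1) \<noteq> 0))
   \<longleftrightarrow> (\<forall>S. finite S \<and> S \<noteq> {} \<and> S \<subseteq> {..<n} \<longrightarrow> admissible q S)"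
proof (intro iffI allI impI)
  fix S :: "nat set"
  assume chain: "\<forall>(m::nat) h. 2 \<le> m \<and> inj_on h {..<m} \<and> h ` {..<m} \<subseteq> {..<n} \<longrightarrow>
      (\<exists>\<tau>. \<tau> permutes {..<m} \<and> (\<Prod>k<m - 1. (\<Prod>l\<in>{k<..<m}. q (h (\<tau> k)) (h (\<tau> l))) - 1) \<noteq> 0)"
    and S: "finite S \<and> S \<noteq> {} \<and> S \<subseteq> {..<n}"
  show "admissible q S"
  proof (cases "card S = 1")
    case True
    then show ?thesis by (auto simp: card_1_singleton_iff admissible.singleton)
  next
    case False
    define h where "h = (!) (sorted_list_of_set S)"
    have inj: "inj_on h {..<card S}"
      using S by (simp add: h_def inj_on_def nth_eq_iff_index_eq)
    have img: "h ` {..<card S} = S"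
      using S unfolding h_def
      by (metis atLeast0LessThan length_sorted_list_of_set map_nth set_map set_upt set_sorted_list_of_set)
    have "2 \<le> card S" using S False by (metis card_0_eq Suc_1 Suc_leI less_one nat_neq_iff)
    have ex: "\<exists>\<tau>. \<tau> permutes {..<card S}
        \<and> (\<Prod>k<card S - 1. (\<Prod>l\<in>{k<..<card S}. q (h (\<tau> k)) (h (\<tau> l))) - 1) \<noteq> 0"
      by (rule chain[rule_format, of "card S" h]) (use \<open>2 \<le> card S\<close> inj img S in auto)
    have "0 < card S" using \<open>2 \<le> card S\<close> by simp
    have "admissible q (h ` {..<card S})"
      by (rule iffD1[OF ex_permutation_chain_iff_admissible[OF inj \<open>0 < card S\<close>, of q] ex])
    then show ?thesis unfolding img .
  qed
next
  fix m :: nat and h :: "nat \<Rightarrow> nat"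
  assume adm: "\<forall>S. finite S \<and> S \<noteq> {} \<and> S \<subseteq> {..<n} \<longrightarrow> admissible q S"
    and mh: "2 \<le> m \<and> inj_on h {..<m} \<and> h ` {..<m} \<subseteq> {..<n}"
  have "finite (h ` {..<m})" "h ` {..<m} \<noteq> {}" "h ` {..<m} \<subseteq> {..<n}"
    using mh by (auto simp: lessThan_empty_iff)
  then have adm_h: "admissible q (h ` {..<m})" using adm by blast
  have "inj_on h {..<m}" "0 < m" using mh by auto
  then show "\<exists>\<tau>. \<tau> permutes {..<m} \<and> (\<Prod>k<m - 1. (\<Prod>l\<in>{k<..<m}. q (h (\<tau> k)) (h (\<tau> l))) - 1) \<noteq> 0"
    by (rule iffD2[OF ex_permutation_chain_iff_admissible[of h m q] adm_h])
qed

fun right_bracket :: "nat list \<Rightarrow> nat list \<Rightarrow> 'a::field" where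
  "right_bracket [] = (\<lambda>w. 0)"
| "right_bracket [x] = tletter x"
| "right_bracket (x # y # r) = tcomm (tletter x) (right_bracket (y # r))"

lemma right_bracket_lie_gen: "set s \<subseteq> {..<n} \<Longrightarrow> right_bracket s \<in> lie_gen n"
  by (induction s rule: right_bracket.induct) (auto intro: lie_gen.intros)

context symmetric_braiding begin

lemma sym_functional_right_bracket:
  "distinct s \<Longrightarrow> set s \<subseteq> {..<n} \<Longrightarrow> s \<noteq> [] \<Longrightarrow> chain_factor q s \<noteq> 0 \<Longrightarrow>
   \<exists>\<kappa>. \<kappa> \<noteq> 0 \<and> (\<forall>S. sym_functional q S (right_bracket s) = (if S = set s then \<kappa> else 0))"
proof (induction s rule: right_bracket.induct)
  case (2 x)
  then show ?case by (intro exI[of _ 1]) (auto simp: sym_functional_tletter)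
next
  case (3 x y r)
  define R where "R = set (y # r)"
  have "x \<notin> R" "R \<subseteq> {..<n}" "{x} \<subseteq> {..<n}" using "3.prems"(1,2) by (auto simp: R_def)
  have "chain_factor q (y # r) \<noteq> 0" and "(\<Prod>z\<leftarrow>y # r. q x z) \<noteq> 1"
    using "3.prems"(4) by auto
  then obtain \<kappa> where \<kappa>: "\<kappa> \<noteq> 0" "\<And>S. sym_functional q S (right_bracket (y # r)) = (if S = R then \<kappa> else 0)"
    using "3.IH" "3.prems" unfolding R_def by auto
  have "(\<Prod>z\<leftarrow>y # r. q x z) = q_prod q {x} R"
    using "3.prems"(1) unfolding R_def q_prod_def by (simp add: prod.distinct_set_conv_list)
  then have "q_prod q {x} R \<noteq> 1" using \<open>(\<Prod>z\<leftarrow>y # r. q x z) \<noteq> 1\<close> by simp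
  define D where "D = upper_q_prod q {x} R - upper_q_prod q R {x}"
  have "{x} \<inter> R = {}" using \<open>x \<notin> R\<close> by simp
  have "D \<noteq> 0"
    unfolding D_def upper_q_prod_diff[OF \<open>{x} \<inter> R = {}\<close> \<open>{x} \<subseteq> {..<n}\<close> \<open>R \<subseteq> {..<n}\<close>]
    using \<open>q_prod q {x} R \<noteq> 1\<close> upper_q_prod_nonzero[OF \<open>R \<subseteq> {..<n}\<close> \<open>{x} \<subseteq> {..<n}\<close>]
    by auto
  have "sym_functional q S (right_bracket (x # y # r)) = (if S = set (x # y # r) then \<kappa> * D else 0)" for S
  proof -
    have "(x \<in> S \<and> S - {x} = R) \<longleftrightarrow> S = set (x # y # r)"
      using \<open>x \<notin> R\<close> unfolding R_def by auto
    then show ?thesis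
      by (auto simp: sym_functional_tcomm_tletter \<kappa>(2) D_def)
  qed
  then show ?case using \<kappa>(1) \<open>D \<noteq> 0\<close> by (intro exI[of _ "\<kappa> * D"]) auto
qed simp

lemma admissible_imp_lie_dual:
  assumes "admissible q S" "S \<subseteq> {..<n}"
  shows "\<exists>L\<in>lie_gen n. \<forall>T. sym_functional q T L = (if T = S then 1 else 0)"
proof -
  obtain s where s: "distinct s" "set s = S" "s \<noteq> []" "chain_factor q s \<noteq> 0"
    using assms(1) unfolding admissible_iff_chain by blast
  then obtain \<kappa> where \<kappa>: "\<kappa> \<noteq> 0" "\<And>T. sym_functional q T (right_bracket s) = (if T = S then \<kappa> else 0)"
    using sym_functional_right_bracket assms(2) by blast
  have "(\<lambda>w. inverse \<kappa> * right_bracket s w) \<in> lie_gen n"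
    using s(2) assms(2) by (intro lie_gen.smult right_bracket_lie_gen) simp
  moreover have "sym_functional q T (\<lambda>w. inverse \<kappa> * right_bracket s w) = (if T = S then 1 else 0)" for T
    using \<kappa> by (simp add: sym_functional_smult)
  ultimately show ?thesis by blast
qed

end

section \<open>Words of length two\<close>

lemma permutes_lessThan_2:
  assumes "\<sigma> permutes {..<2::nat}"
  shows "\<sigma> = id \<or> \<sigma> = transpose 0 1"
proof -
  have out: "\<sigma> x = x" if "x \<ge> 2" for x
    using assms that by (meson lessThan_iff not_le permutes_not_in)
  have "\<sigma> 0 < 2" "\<sigma> 1 < 2"
    using permutes_in_image[OF assms, of 0] permutes_in_image[OF assms, of 1] by auto
  moreover have "\<sigma> 0 \<noteq> \<sigma> 1" using assms by (metis permutes_inj injD zero_neq_one)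
  ultimately consider "\<sigma> 0 = 0" "\<sigma> 1 = 1" | "\<sigma> 0 = 1" "\<sigma> 1 = 0" by linarith
  then show ?thesis
  proof cases
    case 1
    then have "\<sigma> x = x" for x using out[of x] by (cases "x < 2") (auto simp: less_2_cases_iff)
    then show ?thesis by auto
  next
    case 2
    then have "\<sigma> x = transpose 0 1 x" for x
      using out[of x] by (cases "x < 2") (auto simp: less_2_cases_iff transpose_def)
    then show ?thesis by auto
  qed
qed

lemma omega_entry_length2:
  "omega_entry q [a,b] v = (if [a,b] = v then 1 else 0) + (if [b,a] = v then q a b else 0)"
proof -
  have "{\<sigma>. \<sigma> permutes {..<length [a,b]}} = {id, transpose 0 1}"
    using permutes_lessThan_2 by (auto simp: numeral_2_eq_2 permutes_id permutes_swap_id)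
  moreover have "id \<noteq> transpose (0::nat) 1"
    by (metis id_apply transpose_apply_first zero_neq_one)
  ultimately have "omega_entry q [a,b] v
      = (if permword id [a,b] = v then braid_coeff q id [a,b] else 0)
      + (if permword (transpose 0 1) [a,b] = v then braid_coeff q (transpose 0 1) [a,b] else 0)"
    unfolding omega_entry_def by simp
  moreover have "permword id [a,b] = [a,b]" "permword (transpose 0 1) [a,b] = [b,a]"
    by (simp_all add: permword_def numeral_2_eq_2 upt_rec inv_transpose_eq)
  moreover have "braid_coeff q id [a,b] = 1"
  proof -
    have "inversions id (length [a,b]) = {}" by (auto simp: inversions_def)
    then show ?thesis by (simp add: braid_coeff_inversions)
  qed
  moreover have "braid_coeff q (transpose 0 1) [a,b] = q a b"
  proof -
    have "inversions (transpose 0 1) (length [a,b]) = {(0,1)}"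
      by (auto simp: inversions_def transpose_def)
    then show ?thesis by (simp add: braid_coeff_inversions)
  qed
  ultimately show ?thesis by (simp only:)
qed

lemma anagrams_pair: "anagrams [a,b] = {[a,b],[b,a]}"
proof -
  have "w = [a,b] \<or> w = [b,a]" if w: "mset w = mset [a,b]" for w
  proof -
    obtain c d where "w = [c,d]"
      using mset_eq_length[OF w] by (metis length_0_conv length_Suc_conv numeral_2_eq_2)
    with w show ?thesis by (auto simp: add_eq_conv_ex)
  qed
  then show ?thesis by (auto simp: anagrams_def)
qed

lemma nichols_ideal_relation:
  "f \<in> nichols_ideal n q \<Longrightarrow> (\<Sum>w\<in>anagrams v. f w * omega_entry q w v) = 0"
  by (auto simp: nichols_ideal_def tensor_space_def omega_conv_anagrams[symmetric])

definition nichols_spanning :: "nat \<Rightarrow> (nat \<Rightarrow> nat \<Rightarrow> 'a::field) \<Rightarrow> bool" where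
  "nichols_spanning n q \<longleftrightarrow>
     (\<forall>f\<in>tensor_space n. \<exists>c. \<exists>l\<in>lie_gen n. (\<lambda>w. f w - (c * tone w + l w)) \<in> nichols_ideal n q)"

lemma nichols_spanning_tword:
  "nichols_spanning n q \<Longrightarrow> set u \<subseteq> {..<n} \<Longrightarrow>
   \<exists>c. \<exists>l\<in>lie_gen n. (\<lambda>w. tword u w - (c * tone w + l w)) \<in> nichols_ideal n q"
  using tensor_space_tword unfolding nichols_spanning_def by blast

lemma nichols_spanning_imp_q_diag:
  fixes q :: "nat \<Rightarrow> nat \<Rightarrow> 'a::field_char_0"
  assumes "nichols_spanning n q" "i < n"
  shows "q i i = -1"
proof -
  obtain c l where l: "l \<in> lie_gen n" and g: "(\<lambda>w. tword [i,i] w - (c * tone w + l w)) \<in> nichols_ideal n q"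
    using nichols_spanning_tword[OF assms(1), of "[i,i]"] assms(2) by auto
  have "l [i,i] = 0" using lie_gen_antisym_length2[OF l, of i i] by (simp add: eq_neg_iff_add_eq_0)
  then have "1 + q i i = 0"
    using nichols_ideal_relation[OF g, of "[i,i]"]
    by (simp add: anagrams_pair omega_entry_length2 tone_def tword_def)
  then show ?thesis by (simp add: eq_neg_iff_add_eq_0 add.commute)
qed

lemma nichols_spanning_imp_q_inverse:
  fixes q :: "nat \<Rightarrow> nat \<Rightarrow> 'a::field_char_0"
  assumes "nichols_spanning n q" "i < n" "j < n" "i \<noteq> j"
  shows "q i j * q j i = 1"
proof -
  obtain c l where l: "l \<in> lie_gen n" and g: "(\<lambda>w. tword [i,j] w - (c * tone w + l w)) \<in> nichols_ideal n q"
    using nichols_spanning_tword[OF assms(1), of "[i,j]"] assms(2,3) by auto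
  define x where "x = l [i,j]"
  have "l [j,i] = - x" unfolding x_def using lie_gen_antisym_length2[OF l, of j i] .
  then have "(1 - x) + x * q j i = 0" and "(1 - x) * q i j + x = 0"
    using nichols_ideal_relation[OF g, of "[i,j]"] nichols_ideal_relation[OF g, of "[j,i]"] assms(4)
    by (auto simp: anagrams_pair insert_commute omega_entry_length2 tone_def tword_def x_def)
  then have "x \<noteq> 0" "(1 - x) = - (x * q j i)" by (auto simp: eq_neg_iff_add_eq_0)
  with \<open>(1 - x) * q i j + x = 0\<close> have "x * (1 - q i j * q j i) = 0" by (simp add: algebra_simps)
  with \<open>x \<noteq> 0\<close> show ?thesis by simp
qed

lemma omega_Nil: "omega q f [] = f []"
proof -
  have "{w. f w \<noteq> 0 \<and> length w = 0} = (if f [] = 0 then {} else {[]})" by auto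
  moreover have "omega_entry q [] [] = 1"
  proof -
    have "{\<sigma>. \<sigma> permutes {..<length ([] :: nat list)}} = {id}" by simp
    then have "omega_entry q [] [] = braid_coeff q id []" by (simp add: omega_entry_def permword_def)
    also have "\<dots> = 1" by (simp add: braid_coeff_inversions inversions_def)
    finally show ?thesis .
  qed
  ultimately show ?thesis by (simp add: omega_def)
qed

lemma nichols_F_plus_L_iff_spanning: "nichols_F_plus_L n q \<longleftrightarrow> nichols_spanning n q"
proof -
  have "c = 0" if "l \<in> lie_gen n" "(\<lambda>w. c * tone w - l w) \<in> nichols_ideal n q" for c l
    using that omega_Nil[of q "\<lambda>w. c * tone w - l w"]
    by (simp add: nichols_ideal_def tone_def lie_gen_Nil)
  then show ?thesis unfolding nichols_F_plus_L_def nichols_spanning_def by blast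
qed

context symmetric_braiding begin

lemma nichols_spanning_imp_admissible:
  assumes "nichols_spanning n q" "finite S" "S \<noteq> {}" "S \<subseteq> {..<n}"
  shows "admissible q S"
proof -
  define u where "u = sorted_list_of_set S"
  have u: "distinct u" "set u = S" using assms(2) by (simp_all add: u_def)
  obtain c l where l: "l \<in> lie_gen n" and g: "(\<lambda>w. tword u w - (c * tone w + l w)) \<in> nichols_ideal n q"
    using nichols_spanning_tword[OF assms(1), of u] u assms(4) by auto
  have "sym_functional q S (\<lambda>w. tword u w - (c * tone w + l w)) = 0"
    by (rule sym_functional_eq_0_if_ideal[OF g])
  then have "sym_functional q S l = upper_weight q u"
    using u assms(3)
    by (simp add: sym_functional_diff sym_functional_add sym_functional_smult sym_functional_tone
                  sym_functional_tword[symmetric])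
  then have "sym_functional q S l \<noteq> 0" using upper_weight_nonzero u assms(4) by simp
  then show ?thesis using lie_sym_functional_nonzero_imp_admissible[OF l assms(4)] by blast
qed

end

context fermionic_braiding begin

lemma nichols_spanning_if_admissible:
  assumes adm: "\<And>S. finite S \<Longrightarrow> S \<noteq> {} \<Longrightarrow> S \<subseteq> {..<n} \<Longrightarrow> admissible q S"
  shows "nichols_spanning n q"
  unfolding nichols_spanning_def
proof
  fix f :: "nat list \<Rightarrow> 'a" assume f: "f \<in> tensor_space n"
  define SS where "SS = set ` {w. f w \<noteq> 0} - {{}}"
  have "finite SS" using f unfolding SS_def tensor_space_def by blast
  have "\<exists>L\<in>lie_gen n. \<forall>T'. sym_functional q T' L = (if T' = T then 1 else 0)" if T: "T \<in> SS" for T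
  proof -
    obtain w where "f w \<noteq> 0" "T = set w" "w \<noteq> []" using T by (auto simp: SS_def)
    then have "finite T" "T \<noteq> {}" "T \<subseteq> {..<n}" using f by (auto simp: tensor_space_def)
    then show ?thesis using admissible_imp_lie_dual adm by blast
  qed
  then obtain L where L: "\<And>T. T \<in> SS \<Longrightarrow> L T \<in> lie_gen n"
    "\<And>T T'. T \<in> SS \<Longrightarrow> sym_functional q T' (L T) = (if T' = T then 1 else 0)"
    by metis
  define l where "l = (\<lambda>w. \<Sum>T\<in>SS. sym_functional q T f * L T w)"
  have "l \<in> lie_gen n" unfolding l_def using \<open>finite SS\<close> L(1) by (rule lie_gen_sum)
  have l_dual: "sym_functional q S l = (if S \<in> SS then sym_functional q S f else 0)" for S
    unfolding l_def sym_functional_sum using \<open>finite SS\<close>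
    by (simp add: L(2) if_distrib sum.delta' cong: if_cong)
  have "f w = 0" if "w \<in> arrangements S" "S \<notin> SS" "S \<noteq> {}" for w S
    using that by (auto simp: SS_def arrangements_def)
  then have "sym_functional q S f = 0" if "S \<notin> SS" "S \<noteq> {}" for S
    using that unfolding sym_functional_def by simp
  moreover have "{} \<notin> SS" by (simp add: SS_def)
  ultimately have "sym_functional q S (\<lambda>w. f w - (f [] * tone w + l w)) = 0" for S
    using lie_gen_Nil[OF \<open>l \<in> lie_gen n\<close>] by (cases "S = {}")
       (auto simp: sym_functional_diff sym_functional_add sym_functional_smult sym_functional_tone
                   sym_functional_empty l_dual)
  moreover have "(\<lambda>w. f w - (f [] * tone w + l w)) \<in> tensor_space n"
    using f lie_gen_subset_tensor_space[OF \<open>l \<in> lie_gen n\<close>]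
    by (intro tensor_space_diff tensor_space_add tensor_space_smult tensor_space_tone)
  ultimately show "\<exists>c. \<exists>l\<in>lie_gen n. (\<lambda>w. f w - (c * tone w + l w)) \<in> nichols_ideal n q"
    using \<open>l \<in> lie_gen n\<close> ideal_if_sym_functional_eq_0 by blast
qed

end

theorem proposition6p4:
  fixes n :: nat and q :: "nat \<Rightarrow> nat \<Rightarrow> 'a::field_char_0"
  assumes alg_closed: "\<forall>p :: 'a poly. degree p > 0 \<longrightarrow> (\<exists>x. poly p x = 0)"
    and nonzero: "\<forall>i<n. \<forall>j<n. q i j \<noteq> 0"
  shows "nichols_F_plus_L n q \<longleftrightarrow>
    ((\<forall>i<n. q i i = -1)
     \<and> (\<forall>i<n. \<forall>j<n. i \<noteq> j \<longrightarrow> q i j * q j i = 1)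
     \<and> (\<forall>(m::nat) (h::nat \<Rightarrow> nat). 2 \<le> m \<and> inj_on h {..<m} \<and> h ` {..<m} \<subseteq> {..<n} \<longrightarrow>
          (\<exists>\<tau>. \<tau> permutes {..<m} \<and>
             (\<Prod>k<m - 1. (\<Prod>l\<in>{k<..<m}. q (h (\<tau> k)) (h (\<tau> l))) - 1) \<noteq> 0)))"
proof -
  have "nichols_spanning n q \<longleftrightarrow> (\<forall>i<n. q i i = -1) \<and> (\<forall>i<n. \<forall>j<n. i \<noteq> j \<longrightarrow> q i j * q j i = 1)
      \<and> (\<forall>S. finite S \<and> S \<noteq> {} \<and> S \<subseteq> {..<n} \<longrightarrow> admissible q S)"
    (is "_ \<longleftrightarrow> ?diag \<and> ?inverse \<and> ?admissible")
  proof
    assume spanning: "nichols_spanning n q"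
    have diag: ?diag and inverse: ?inverse
      using nichols_spanning_imp_q_diag[OF spanning] nichols_spanning_imp_q_inverse[OF spanning] by blast+
    interpret symmetric_braiding n q using nonzero inverse by unfold_locales
    have ?admissible using nichols_spanning_imp_admissible[OF spanning] by blast
    with diag inverse show "?diag \<and> ?inverse \<and> ?admissible" by blast
  next
    assume conditions: "?diag \<and> ?inverse \<and> ?admissible"
    then interpret fermionic_braiding n q using nonzero by unfold_locales blast+
    show "nichols_spanning n q" using nichols_spanning_if_admissible conditions by blast
  qed
  then show ?thesis unfolding nichols_F_plus_L_iff_spanning chain_condition_iff_admissible .
qed

end
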